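(* Let $(P+Q,\omega)$ be a labeled disjoint sum of posets and fix $s\in P$ such that $\omega(s) > \omega(t)$ for all $t\in Q$. Let $|P+Q|=n$ and $|P|=p$. Then \[ e_q^{\mathrm{maj}}(P+Q,\omega;s) = \binom{n-1}{p-1}_{q}\, e_q^{\mathrm{maj}}(P,\omega_1;s)\, e_q^{\mathrm{maj}}(Q,\omega_2), \] where $\omega_1,\omega_2$ are the restrictions of $\omega$ to $P$ and $Q$.
   Context: A labeled poset $(P,\omega)$ of size $n$ is a finite poset $P$ with a bijective labeling $\omega:P\to[n]$. For a linear extension $f:P\to[n]$ (an order-preserving bijection), the permutation $\omega\circ f^{-1}\in\mathfrak{S}_n$ is called a linear extension of the labeled poset; $\mathcal{L}(P,\omega)$ denotes the set of these. For $\sigma\in\mathfrak{S}_n$, $\mathrm{Des}(\sigma)=\{i\in[n-1]:\sigma_i>\sigma_{i+1}\}$ and $\mathrm{maj}(\sigma)=\sum_{i\in\mathrm{Des}(\sigma)} i$. Define $e_q^{\mathrm{maj}}(P,\omega)=\sum_{\sigma\in\mathcal{L}(P,\omega)}q^{\mathrm{maj}(\sigma)}$, and for fixed $s\in P$, $e_q^{\mathrm{maj}}(P,\omega;s)=\sum q^{\mathrm{maj}(\sigma)}$ summed over those $\sigma\in\mathcal{L}(P,\omega)$ that end with $\omega(s)$. Labels on $P$ and $Q$ are compared via the (order-preserving) relabelings induced by restricting $\omega$. The $q$-binomial coefficient is $\binom{m}{k}_q=\frac{[m]_q!}{[k]_q!\,[m-k]_q!}$ with $[m]_q=1+q+\cdots+q^{m-1}$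 and $[m]_q!=[m]_q\cdots[1]_q$. *)

theory Defs
  imports "HOL-Computational_Algebra.Polynomial"
begin

definition is_poset :: "'a set \<Rightarrow> ('a \<Rightarrow> 'a \<Rightarrow> bool) \<Rightarrow> bool" where
  "is_poset X le \<longleftrightarrow> finite X \<and> (\<forall>x\<in>X. le x x)
     \<and> (\<forall>x\<in>X. \<forall>y\<in>X. le x y \<and> le y x \<longrightarrow> x = y)
     \<and> (\<forall>x\<in>X. \<forall>y\<in>X. \<forall>z\<in>X. le x y \<and> le y z \<longrightarrow> le x z)"

definition is_labeled_poset :: "'a set \<Rightarrow> ('a \<Rightarrow> 'a \<Rightarrow> bool) \<Rightarrow> ('a \<Rightarrow> nat) \<Rightarrow> bool" where
  "is_labeled_poset X le \<omega> \<longleftrightarrow> is_poset X le \<and> bij_betw \<omega> X {1..card X}"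

text \<open>Order-preserving relabeling (standardization) of the restriction of \<omega> to Y.\<close>
definition restrict_label :: "('a \<Rightarrow> nat) \<Rightarrow> 'a set \<Rightarrow> 'a \<Rightarrow> nat" where
  "restrict_label \<omega> Y x = card {y\<in>Y. \<omega> y \<le> \<omega> x}"

text \<open>Linear extensions of the labeled poset (X, \<omega>): a linear extension f is
encoded by the list xs of elements in the order f^{-1}(1), ..., f^{-1}(n);
the corresponding permutation \<omega> \<circ> f^{-1} is the word map \<omega> xs.\<close>
definition lin_ext :: "'a set \<Rightarrow> ('a \<Rightarrow> 'a \<Rightarrow> bool) \<Rightarrow> ('a \<Rightarrow> nat) \<Rightarrow> nat list set" where
  "lin_ext X le \<omega> = {map \<omega> xs | xs. distinct xs \<and> set xs = X \<and>
      (\<forall>i<length xs. \<forall>j<length xs. le (xs ! i) (xs ! j) \<longrightarrow> i \<le> j)}"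

text \<open>Major index (positions are 1-based).\<close>
definition maj :: "nat list \<Rightarrow> nat" where
  "maj \<sigma> = (\<Sum>i\<in>{i. Suc i < length \<sigma> \<and> \<sigma> ! i > \<sigma> ! Suc i}. Suc i)"

definition e_maj :: "'a set \<Rightarrow> ('a \<Rightarrow> 'a \<Rightarrow> bool) \<Rightarrow> ('a \<Rightarrow> nat) \<Rightarrow> int poly" where
  "e_maj X le \<omega> = (\<Sum>\<sigma>\<in>lin_ext X le \<omega>. monom 1 (maj \<sigma>))"

definition e_maj_end :: "'a set \<Rightarrow> ('a \<Rightarrow> 'a \<Rightarrow> bool) \<Rightarrow> ('a \<Rightarrow> nat) \<Rightarrow> 'a \<Rightarrow> int poly" where
  "e_maj_end X le \<omega> s = (\<Sum>\<sigma>\<in>{\<sigma>\<in>lin_ext X le \<omega>. \<sigma> \<noteq> [] \<and> last \<sigma> = \<omega> s}. monom 1 (maj \<sigma>))"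

definition q_int :: "nat \<Rightarrow> int poly" where
  "q_int m = (\<Sum>j<m. monom 1 j)"

definition q_fact :: "nat \<Rightarrow> int poly" where
  "q_fact m = (\<Prod>i\<in>{1..m}. q_int i)"

definition q_binom :: "nat \<Rightarrow> nat \<Rightarrow> int poly" where
  "q_binom m k = q_fact m div (q_fact k * q_fact (m - k))"

end

theory Submission
  imports Defs
begin

(* A linear extension of the disjoint sum P + Q is exactly a shuffle of a linear extension u of P
   with one v of Q, and it ends with s iff u does. Summing q^maj over the shuffles of u with v
   that keep s last gives q^(maj u + maj v) times the Gaussian binomial [|u| + |v| - 1, |v|],
   except for an extra factor q^|v| when s is smaller than the last letter of v, which cannot
   happen since the label of s exceeds every label of Q. This shuffle identity is proved by
   induction on the total length: the second-to-last letter comes from u or from v, and the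
   six relative orders of the three letters involved are matched by the two q-Pascal
   recurrences. Finally maj only depends on the relative order of the labels, so standardising
   the labels of P and Q does not change their generating functions. *)

lemma maj_snoc:
  "maj (\<sigma> @ [c]) = maj \<sigma> + (if \<sigma> \<noteq> [] \<and> c < last \<sigma> then length \<sigma> else 0)"
proof -
  let ?D = "\<lambda>\<tau>. {i. Suc i < length \<tau> \<and> \<tau> ! Suc i < \<tau> ! i}"
  have D_snoc: "?D (\<sigma> @ [c]) = ?D \<sigma> \<union> {i. Suc i = length \<sigma> \<and> c < last \<sigma>}"
  proof (rule set_eqI)
    fix i
    have last_nth: "Suc i = length \<sigma> \<Longrightarrow> last \<sigma> = \<sigma> ! i"
      by (cases \<sigma> rule: rev_cases) auto
    consider "Suc i < length \<sigma>" | "Suc i = length \<sigma>" | "length \<sigma> < Suc i"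
      by linarith
    then show "i \<in> ?D (\<sigma> @ [c]) \<longleftrightarrow> i \<in> ?D \<sigma> \<union> {i. Suc i = length \<sigma> \<and> c < last \<sigma>}"
      by cases (auto simp: nth_append last_nth)
  qed
  have "finite (?D \<sigma>)"
    by (rule finite_subset[of _ "{..<length \<sigma>}"]) auto
  moreover have "{i. Suc i = length \<sigma> \<and> c < last \<sigma>}
      = (if \<sigma> \<noteq> [] \<and> c < last \<sigma> then {length \<sigma> - 1} else {})"
    by auto
  ultimately show ?thesis
    unfolding maj_def D_snoc by (subst sum.union_disjoint) auto
qed

(* Words are handled reversed, so that their last letter is the head of a list, where
   shuffles recurse. *)
definition rmaj :: "('a \<Rightarrow> nat) \<Rightarrow> 'a list \<Rightarrow> nat" where
  "rmaj f r = maj (map f (rev r))"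

lemma rmaj_Nil [simp]: "rmaj f [] = 0"
  by (simp add: rmaj_def maj_def)

lemma rmaj_Cons:
  "rmaj f (c # r) = rmaj f r + (if r \<noteq> [] \<and> f c < f (hd r) then length r else 0)"
  by (cases "r = []") (simp add: rmaj_def maj_def, simp add: rmaj_def maj_snoc last_map last_rev)

lemma rmaj_cong:
  assumes "\<forall>a\<in>set r. \<forall>b\<in>set r. f a < f b \<longleftrightarrow> g a < g b"
  shows "rmaj f r = rmaj g r"
  using assms by (induction r) (auto simp: rmaj_Cons)

lemma monom_1_add: "monom (1::'a::comm_semiring_1) (m + n) = monom 1 m * monom 1 n"
  by (simp add: mult_monom)

fun gauss_binom :: "nat \<Rightarrow> nat \<Rightarrow> int poly" where
  "gauss_binom m 0 = 1"
| "gauss_binom 0 (Suc k) = 0"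
| "gauss_binom (Suc m) (Suc k) = gauss_binom m k + monom 1 (Suc k) * gauss_binom m (Suc k)"

lemma gauss_binom_eq_0: "m < k \<Longrightarrow> gauss_binom m k = 0"
  by (induction m k rule: gauss_binom.induct) auto

lemma gauss_binom_diag [simp]: "gauss_binom m m = 1"
  by (induction m) (simp_all add: gauss_binom_eq_0)

lemma q_int_add: "q_int (m + n) = q_int m + monom 1 m * q_int n"
  by (induction n) (simp_all add: q_int_def monom_1_add algebra_simps)

lemma q_fact_0 [simp]: "q_fact 0 = 1"
  by (simp add: q_fact_def)

lemma q_fact_Suc: "q_fact (Suc n) = q_fact n * q_int (Suc n)"
  by (simp add: q_fact_def)

lemma poly_q_fact_1: "poly (q_fact n) 1 = fact n"
  by (induction n) (simp_all add: q_fact_Suc q_int_def poly_sum poly_monom)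

lemma q_fact_nonzero: "q_fact n \<noteq> 0"
  using poly_q_fact_1[of n] by auto

lemma gauss_binom_q_fact: "gauss_binom (j + k) k * q_fact k * q_fact j = q_fact (j + k)"
proof (induction j arbitrary: k)
  case 0
  show ?case by simp
next
  case (Suc j)
  note IH_j = Suc.IH
  show ?case
  proof (induction k)
    case 0
    show ?case by simp
  next
    case (Suc k)
    have "gauss_binom (Suc j + Suc k) (Suc k) * q_fact (Suc k) * q_fact (Suc j)
        = gauss_binom (Suc j + k) k * q_fact k * q_fact (Suc j) * q_int (Suc k)
          + monom 1 (Suc k) * (gauss_binom (j + Suc k) (Suc k) * q_fact (Suc k) * q_fact j) * q_int (Suc j)"
      by (simp add: q_fact_Suc algebra_simps)
    also have "\<dots> = q_fact (Suc j + k) * (q_int (Suc k) + monom 1 (Suc k) * q_int (Suc j))"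
      using Suc.IH IH_j[of "Suc k"] by (simp add: algebra_simps)
    also have "\<dots> = q_fact (Suc j + Suc k)"
      using q_int_add[of "Suc k" "Suc j"] by (simp add: q_fact_Suc add.commute)
    finally show ?case .
  qed
qed

lemma q_binom_eq_gauss_binom: "q_binom (j + k) k = gauss_binom (j + k) k"
  unfolding q_binom_def gauss_binom_q_fact[symmetric, of j k]
  by (simp add: q_fact_nonzero mult.assoc)

lemma gauss_binom_symmetric: "gauss_binom (j + k) k = gauss_binom (j + k) j"
proof -
  have "(q_fact j * q_fact k) * gauss_binom (j + k) k = (q_fact j * q_fact k) * gauss_binom (j + k) j"
    using gauss_binom_q_fact[of j k] gauss_binom_q_fact[of k j] by (simp add: add.commute mult_ac)
  then show ?thesis
    using q_fact_nonzero by simp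
qed

lemma gauss_binom_Suc_Suc_dual:
  "gauss_binom (Suc (j + k)) (Suc k) = gauss_binom (j + k) (Suc k) + monom 1 j * gauss_binom (j + k) k"
proof (cases j)
  case 0
  then show ?thesis by (simp add: gauss_binom_eq_0)
next
  case (Suc i)
  have "gauss_binom (Suc (j + k)) (Suc k) = gauss_binom (Suc (i + Suc k)) (Suc i)"
    using gauss_binom_symmetric[of "Suc i" "Suc k"] Suc by (simp add: add.commute)
  also have "\<dots> = gauss_binom (i + Suc k) i + monom 1 j * gauss_binom (Suc i + k) (Suc i)"
    using Suc by simp
  also have "\<dots> = gauss_binom (j + k) (Suc k) + monom 1 j * gauss_binom (j + k) k"
    using gauss_binom_symmetric[of "Suc k" i] gauss_binom_symmetric[of k "Suc i"] Suc
    by (simp add: add.commute)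
  finally show ?thesis .
qed

lemma pascal_pair_combination:
  fixes x y z :: "'a::linorder" and A B G :: "int poly"
  assumes "x \<noteq> y" "x \<noteq> z" "y \<noteq> z"
    and G_A: "G = A + monom 1 b * B" and G_B: "G = B + monom 1 a * A"
  shows "monom 1 ((if x < z then a + b else 0) + (if z < y then b else 0)) * B
       + monom 1 ((if x < y then a + b else 0) + (if y < z then a else 0)) * A
       = monom 1 ((if x < z then a else 0) + (if x < y then b else 0)) * G"
  using assms(1-3)
  by (cases "x < y"; cases "x < z"; cases "y < z";
      ((simp add: G_A monom_1_add algebra_simps; fail) | simp add: G_B monom_1_add algebra_simps))

definition shuffle_maj :: "('a \<Rightarrow> nat) \<Rightarrow> 'a \<Rightarrow> 'a list \<Rightarrow> 'a list \<Rightarrow> int poly" where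
  "shuffle_maj f x xs ys = (\<Sum>r\<in>shuffles xs ys. monom 1 (rmaj f (x # r)))"

lemma shuffle_maj_Cons_Cons:
  assumes "z \<noteq> y"
  shows "shuffle_maj f x (z # xs) (y # ys) =
      monom 1 (if f x < f z then length xs + length ys + 2 else 0) * shuffle_maj f z xs (y # ys)
    + monom 1 (if f x < f y then length xs + length ys + 2 else 0) * shuffle_maj f y ys (z # xs)"
proof -
  have rmaj_Cons_Cons: "rmaj f (x # w # r) =
      (if f x < f w then length xs + length ys + 2 else 0) + rmaj f (w # r)"
    if "length r = Suc (length xs + length ys)" for w r
    using that by (simp add: rmaj_Cons)
  have "shuffle_maj f x (z # xs) (y # ys)
      = (\<Sum>r\<in>shuffles xs (y # ys). monom 1 (rmaj f (x # z # r)))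
      + (\<Sum>r\<in>shuffles ys (z # xs). monom 1 (rmaj f (x # y # r)))"
    unfolding shuffle_maj_def shuffles.simps(3) shuffles_commutes[of "z # xs" ys]
    using assms by (subst sum.union_disjoint) (auto simp: sum.reindex)
  then show ?thesis
    by (simp add: shuffle_maj_def sum_distrib_left rmaj_Cons_Cons length_shuffles monom_1_add)
qed

lemma shuffle_maj_Cons_Cons_eq:
  assumes "f x \<noteq> f y" "f x \<noteq> f z" "f y \<noteq> f z"
    and IH_z: "shuffle_maj f z xs (y # ys) =
      monom 1 (rmaj f (z # xs) + rmaj f (y # ys) + (if f z < f y then Suc (length ys) else 0))
        * gauss_binom (length xs + Suc (length ys)) (Suc (length ys))"
    and IH_y: "shuffle_maj f y ys (z # xs) =
      monom 1 (rmaj f (y # ys) + rmaj f (z # xs) + (if f y < f z then Suc (length xs) else 0))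
        * gauss_binom (length ys + Suc (length xs)) (Suc (length xs))"
  shows "shuffle_maj f x (z # xs) (y # ys) =
    monom 1 (rmaj f (x # z # xs) + rmaj f (y # ys) + (if f x < f y then Suc (length ys) else 0))
      * gauss_binom (Suc (length xs) + Suc (length ys)) (Suc (length ys))"
proof -
  have "z \<noteq> y"
    using assms(3) by auto
  define a b m where "a = Suc (length xs)" and "b = length ys" and "m = rmaj f (z # xs) + rmaj f (y # ys)"
  have IH_z': "shuffle_maj f z xs (y # ys) =
      monom 1 (m + (if f z < f y then Suc b else 0)) * gauss_binom (a + b) (Suc b)"
    using IH_z by (simp add: a_def b_def m_def)
  have IH_y': "shuffle_maj f y ys (z # xs) =
      monom 1 (m + (if f y < f z then a else 0)) * gauss_binom (a + b) b"
    using IH_y gauss_binom_symmetric[of b a] by (simp add: a_def b_def m_def add_ac)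
  have "shuffle_maj f x (z # xs) (y # ys) =
      monom 1 (if f x < f z then a + Suc b else 0) * shuffle_maj f z xs (y # ys)
    + monom 1 (if f x < f y then a + Suc b else 0) * shuffle_maj f y ys (z # xs)"
    using shuffle_maj_Cons_Cons[OF \<open>z \<noteq> y\<close>, of f x xs ys] by (simp add: a_def b_def)
  also have "\<dots> = monom 1 m *
       (monom 1 ((if f x < f z then a + Suc b else 0) + (if f z < f y then Suc b else 0)) * gauss_binom (a + b) (Suc b)
      + monom 1 ((if f x < f y then a + Suc b else 0) + (if f y < f z then a else 0)) * gauss_binom (a + b) b)"
    unfolding IH_z' IH_y' by (simp add: monom_1_add algebra_simps)
  also have "\<dots> = monom 1 m *
       (monom 1 ((if f x < f z then a else 0) + (if f x < f y then Suc b else 0)) * gauss_binom (Suc (a + b)) (Suc b))"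
    using gauss_binom.simps(3)[of "a + b" b] gauss_binom_Suc_Suc_dual[of a b]
    by (subst pascal_pair_combination[OF assms(1,2)]) (simp_all add: assms)
  also have "\<dots> = monom 1 (rmaj f (x # z # xs) + rmaj f (y # ys) + (if f x < f y then Suc (length ys) else 0))
      * gauss_binom (Suc (length xs) + Suc (length ys)) (Suc (length ys))"
    by (simp add: rmaj_Cons a_def b_def m_def monom_1_add algebra_simps)
  finally show ?thesis .
qed

lemma shuffle_maj_eq:
  assumes "distinct (x # xs @ ys)" "inj_on f (set (x # xs @ ys))"
  shows "shuffle_maj f x xs ys =
    monom 1 (rmaj f (x # xs) + rmaj f ys + (if ys \<noteq> [] \<and> f x < f (hd ys) then length ys else 0))
      * gauss_binom (length xs + length ys) (length ys)"
  using assms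
proof (induction "length xs + length ys" arbitrary: x xs ys rule: less_induct)
  case less
  consider "xs = []" | "ys = []" | z xs' y ys' where "xs = z # xs'" "ys = y # ys'"
    by (meson list.exhaust)
  then show ?case
  proof cases
    case 1
    then show ?thesis by (simp add: shuffle_maj_def rmaj_Cons)
  next
    case 2
    then show ?thesis by (simp add: shuffle_maj_def)
  next
    case 3
    have f_neq: "f x \<noteq> f y" "f x \<noteq> f z" "f y \<noteq> f z"
      using less.prems 3 by (auto dest: inj_onD)
    have "distinct (z # xs' @ ys)" "inj_on f (set (z # xs' @ ys))"
      and "distinct (y # ys' @ xs)" "inj_on f (set (y # ys' @ xs))"
      using less.prems 3 by (auto intro: inj_on_subset)
    then have IH_z: "shuffle_maj f z xs' (y # ys') =
        monom 1 (rmaj f (z # xs') + rmaj f (y # ys') + (if f z < f y then Suc (length ys') else 0))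
          * gauss_binom (length xs' + Suc (length ys')) (Suc (length ys'))"
      and IH_y: "shuffle_maj f y ys' (z # xs') =
        monom 1 (rmaj f (y # ys') + rmaj f (z # xs') + (if f y < f z then Suc (length xs') else 0))
          * gauss_binom (length ys' + Suc (length xs')) (Suc (length xs'))"
      using less.hyps[of xs' ys z] less.hyps[of ys' xs y] 3 by simp_all
    show ?thesis
      using shuffle_maj_Cons_Cons_eq[OF f_neq IH_z IH_y] unfolding 3 by simp
  qed
qed

lemma sum_shuffles_hd:
  assumes "u \<noteq> []" "s \<notin> set v"
  shows "(\<Sum>r\<in>shuffles u v. if hd r = s then g r else 0)
    = (if hd u = s then \<Sum>r\<in>shuffles (tl u) v. g (s # r) else 0)"
proof -
  have "{r\<in>shuffles u v. hd r = s} = (if hd u = s then (#) s ` shuffles (tl u) v else {})"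
  proof (rule set_eqI)
    fix r
    show "r \<in> {r\<in>shuffles u v. hd r = s} \<longleftrightarrow> r \<in> (if hd u = s then (#) s ` shuffles (tl u) v else {})"
      using assms by (cases r) (auto simp: Cons_in_shuffles_iff dest: hd_in_set)
  qed
  then show ?thesis
    by (simp add: sum.inter_filter[symmetric] sum.reindex)
qed

lemma sum_shuffles_hd_rmaj:
  assumes "distinct (u @ v)" "inj_on f (set (u @ v))" "u \<noteq> []" "\<forall>y\<in>set v. f y < f s"
  shows "(\<Sum>r\<in>shuffles u v. if hd r = s then monom 1 (rmaj f r) else 0)
    = (if hd u = s then monom 1 (rmaj f u + rmaj f v) else 0)
        * gauss_binom (length u + length v - 1) (length v)"
proof -
  have "s \<notin> set v"
    using assms(4) by blast
  moreover have "shuffle_maj f s (tl u) v =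
      monom 1 (rmaj f u + rmaj f v) * gauss_binom (length u + length v - 1) (length v)"
    if "hd u = s"
  proof -
    have u: "s # tl u = u"
      using that assms(3) by (cases u) auto
    have "distinct (s # tl u @ v)" "set (s # tl u @ v) = set (u @ v)"
      unfolding append_Cons[symmetric] u using assms(1) by simp_all
    moreover have "(if v \<noteq> [] \<and> f s < f (hd v) then length v else 0) = 0"
      using assms(4) hd_in_set[of v] by fastforce
    ultimately have "shuffle_maj f s (tl u) v =
        monom 1 (rmaj f (s # tl u) + rmaj f v) * gauss_binom (length (tl u) + length v) (length v)"
      using shuffle_maj_eq[of s "tl u" v f] assms(2) by simp
    moreover have "length (tl u) + length v = length u + length v - 1"
      using assms(3) by (cases u) simp_all
    ultimately show ?thesis
      unfolding u by simp
  qed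
  ultimately show ?thesis
    using assms(3) by (simp add: sum_shuffles_hd shuffle_maj_def)
qed

lemma nth_le_imp_le_iff_sorted_wrt:
  "(\<forall>i<length xs. \<forall>j<length xs. le (xs ! i) (xs ! j) \<longrightarrow> i \<le> j)
    \<longleftrightarrow> sorted_wrt (\<lambda>a b. \<not> le b a) xs"
  unfolding sorted_wrt_iff_nth_less
proof (intro iffI allI impI notI)
  fix i j
  assume "\<forall>i<length xs. \<forall>j<length xs. le (xs ! i) (xs ! j) \<longrightarrow> i \<le> j"
    and "i < j" "j < length xs" "le (xs ! j) (xs ! i)"
  then have "j \<le> i"
    using less_trans[of i j "length xs"] by blast
  with \<open>i < j\<close> show False by simp
next
  fix i j
  assume "\<forall>i j. i < j \<longrightarrow> j < length xs \<longrightarrow> \<not> le (xs ! j) (xs ! i)"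
    and "i < length xs" "j < length xs" "le (xs ! i) (xs ! j)"
  then show "i \<le> j" by (meson not_le)
qed

definition rev_lin_exts :: "'a set \<Rightarrow> ('a \<Rightarrow> 'a \<Rightarrow> bool) \<Rightarrow> 'a list set" where
  "rev_lin_exts X le = {r. distinct r \<and> set r = X \<and> sorted_wrt (\<lambda>a b. \<not> le a b) r}"

lemma lin_ext_eq_image_rev_lin_exts:
  "lin_ext X le \<omega> = (\<lambda>r. map \<omega> (rev r)) ` rev_lin_exts X le"
proof -
  have "lin_ext X le \<omega> = map \<omega> ` {xs. distinct xs \<and> set xs = X \<and> sorted_wrt (\<lambda>a b. \<not> le b a) xs}"
    unfolding lin_ext_def nth_le_imp_le_iff_sorted_wrt by blast
  also have "{xs. distinct xs \<and> set xs = X \<and> sorted_wrt (\<lambda>a b. \<not> le b a) xs} = rev ` rev_lin_exts X le"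
    unfolding rev_lin_exts_def by (force simp: sorted_wrt_rev intro: image_eqI[of _ rev "rev _"])
  finally show ?thesis
    by (simp add: image_image)
qed

lemma finite_rev_lin_exts: "finite X \<Longrightarrow> finite (rev_lin_exts X le)"
  by (rule finite_subset[OF _ finite_subset_distinct]) (auto simp: rev_lin_exts_def)

lemma inj_on_map_rev_rev_lin_exts:
  "inj_on \<omega> X \<Longrightarrow> inj_on (\<lambda>r. map \<omega> (rev r)) (rev_lin_exts X le)"
  by (rule inj_onI) (auto simp: rev_lin_exts_def dest: map_inj_on)

lemma e_maj_eq_sum_rev_lin_exts:
  "inj_on \<omega> X \<Longrightarrow> e_maj X le \<omega> = (\<Sum>r\<in>rev_lin_exts X le. monom 1 (rmaj \<omega> r))"
  unfolding e_maj_def lin_ext_eq_image_rev_lin_exts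
  by (simp add: sum.reindex inj_on_map_rev_rev_lin_exts rmaj_def)

lemma e_maj_end_eq_sum_rev_lin_exts:
  assumes "finite X" "inj_on \<omega> X" "s \<in> X"
  shows "e_maj_end X le \<omega> s =
    (\<Sum>r\<in>rev_lin_exts X le. if hd r = s then monom 1 (rmaj \<omega> r) else 0)"
proof -
  have "{\<sigma>\<in>lin_ext X le \<omega>. \<sigma> \<noteq> [] \<and> last \<sigma> = \<omega> s}
      = (\<lambda>r. map \<omega> (rev r)) ` {r\<in>rev_lin_exts X le. hd r = s}"
  proof -
    have "map \<omega> (rev r) \<noteq> [] \<and> last (map \<omega> (rev r)) = \<omega> s \<longleftrightarrow> hd r = s"
      if "r \<in> rev_lin_exts X le" for r
    proof -
      have "set r = X"
        using that by (simp add: rev_lin_exts_def)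
      then have "r \<noteq> []"
        using assms(3) by auto
      moreover have "hd r \<in> X"
        using \<open>set r = X\<close> \<open>r \<noteq> []\<close> hd_in_set by blast
      ultimately show ?thesis
        using assms(2,3) by (simp add: last_map last_rev inj_on_eq_iff)
    qed
    then show ?thesis
      unfolding lin_ext_eq_image_rev_lin_exts by blast
  qed
  moreover have "inj_on (\<lambda>r. map \<omega> (rev r)) {r\<in>rev_lin_exts X le. hd r = s}"
    using inj_on_map_rev_rev_lin_exts[OF assms(2)] by (rule inj_on_subset) auto
  ultimately show ?thesis
    unfolding e_maj_end_def rmaj_def
    by (simp add: sum.reindex sum.inter_filter finite_rev_lin_exts assms(1))
qed

lemma restrict_label_less_iff:
  assumes "finite Y" "a \<in> Y" "b \<in> Y"
  shows "restrict_label \<omega> Y a < restrict_label \<omega> Y b \<longleftrightarrow> \<omega> a < \<omega> b"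
proof (cases "\<omega> a < \<omega> b")
  case True
  then have "{y\<in>Y. \<omega> y \<le> \<omega> a} \<subseteq> {y\<in>Y. \<omega> y \<le> \<omega> b}"
    by auto
  moreover have "b \<in> {y\<in>Y. \<omega> y \<le> \<omega> b} - {y\<in>Y. \<omega> y \<le> \<omega> a}"
    using True assms(3) by auto
  ultimately have "{y\<in>Y. \<omega> y \<le> \<omega> a} \<subset> {y\<in>Y. \<omega> y \<le> \<omega> b}"
    by blast
  then show ?thesis
    using True assms(1) by (simp add: restrict_label_def psubset_card_mono)
next
  case False
  then have "{y\<in>Y. \<omega> y \<le> \<omega> b} \<subseteq> {y\<in>Y. \<omega> y \<le> \<omega> a}"
    by auto
  then show ?thesis
    using False assms(1) by (simp add: restrict_label_def card_mono leD)
qed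

lemma inj_on_restrict_label:
  assumes "finite Y" "inj_on \<omega> Y"
  shows "inj_on (restrict_label \<omega> Y) Y"
proof (rule inj_onI)
  fix a b
  assume "a \<in> Y" "b \<in> Y" "restrict_label \<omega> Y a = restrict_label \<omega> Y b"
  then have "\<omega> a = \<omega> b"
    using restrict_label_less_iff[OF assms(1)] by (metis less_irrefl linorder_neqE_nat)
  then show "a = b"
    using \<open>a \<in> Y\<close> \<open>b \<in> Y\<close> assms(2) by (simp add: inj_on_eq_iff)
qed

lemma rmaj_restrict_label:
  "finite Y \<Longrightarrow> set r \<subseteq> Y \<Longrightarrow> rmaj (restrict_label \<omega> Y) r = rmaj \<omega> r"
  by (rule rmaj_cong) (meson restrict_label_less_iff subsetD)

lemma e_maj_restrict_label:
  assumes "finite X" "inj_on \<omega> X"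
  shows "e_maj X le (restrict_label \<omega> X) = e_maj X le \<omega>"
  using assms
  by (auto simp: e_maj_eq_sum_rev_lin_exts inj_on_restrict_label rev_lin_exts_def
           rmaj_restrict_label intro!: sum.cong)

lemma e_maj_end_restrict_label:
  assumes "finite X" "inj_on \<omega> X" "s \<in> X"
  shows "e_maj_end X le (restrict_label \<omega> X) s = e_maj_end X le \<omega> s"
  using assms
  by (auto simp: e_maj_end_eq_sum_rev_lin_exts inj_on_restrict_label rev_lin_exts_def
           rmaj_restrict_label intro!: sum.cong)

lemma sorted_wrt_shuffles:
  assumes "zs \<in> shuffles xs ys" "sorted_wrt R xs" "sorted_wrt R ys"
    and "\<forall>a\<in>set xs. \<forall>b\<in>set ys. R a b \<and> R b a"
  shows "sorted_wrt R zs"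
  using assms
  by (induction xs ys arbitrary: zs rule: shuffles.induct) (auto simp: set_shuffles)

lemma filter_rev_lin_exts:
  "r \<in> rev_lin_exts X le \<Longrightarrow> filter P r \<in> rev_lin_exts {x\<in>X. P x} le"
  by (auto simp: rev_lin_exts_def sorted_wrt_filter)

lemma rev_lin_exts_Un_fiber:
  assumes "P \<inter> Q = {}" "\<forall>x\<in>P. \<forall>y\<in>Q. \<not> le x y \<and> \<not> le y x"
    and u: "u \<in> rev_lin_exts P le" and v: "v \<in> rev_lin_exts Q le"
  shows "{r\<in>rev_lin_exts (P \<union> Q) le. filter (\<lambda>x. x \<in> P) r = u \<and> filter (\<lambda>x. x \<notin> P) r = v}
    = shuffles u v"
proof (intro set_eqI iffI)
  fix r
  assume "r \<in> {r\<in>rev_lin_exts (P \<union> Q) le. filter (\<lambda>x. x \<in> P) r = u \<and> filter (\<lambda>x. x \<notin> P) r = v}"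
  then show "r \<in> shuffles u v"
    using partition_in_shuffles[of r "\<lambda>x. x \<in> P"] by auto
next
  fix r
  assume r: "r \<in> shuffles u v"
  have u': "distinct u" "set u = P" "sorted_wrt (\<lambda>a b. \<not> le a b) u"
    and v': "distinct v" "set v = Q" "sorted_wrt (\<lambda>a b. \<not> le a b) v"
    using u v by (simp_all add: rev_lin_exts_def)
  have disj: "set u \<inter> set v = {}"
    using u' v' assms(1) by simp
  have "distinct r"
    using distinct_disjoint_shuffles[OF u'(1) v'(1) disj r] .
  moreover have "set r = P \<union> Q"
    using set_shuffles[OF r] u'(2) v'(2) by simp
  moreover have "sorted_wrt (\<lambda>a b. \<not> le a b) r"
    using sorted_wrt_shuffles[OF r u'(3) v'(3)] assms(2) u'(2) v'(2) by blast
  moreover have "filter (\<lambda>x. x \<in> P) r = u" "filter (\<lambda>x. x \<notin> P) r = v"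
    using filter_shuffles_disjoint1[OF disj r] u'(2) by simp_all
  ultimately show "r \<in> {r\<in>rev_lin_exts (P \<union> Q) le. filter (\<lambda>x. x \<in> P) r = u \<and> filter (\<lambda>x. x \<notin> P) r = v}"
    by (simp add: rev_lin_exts_def)
qed

lemma sum_rev_lin_exts_Un:
  assumes "finite P" "finite Q" "P \<inter> Q = {}" "\<forall>x\<in>P. \<forall>y\<in>Q. \<not> le x y \<and> \<not> le y x"
  shows "(\<Sum>r\<in>rev_lin_exts (P \<union> Q) le. g r)
    = (\<Sum>u\<in>rev_lin_exts P le. \<Sum>v\<in>rev_lin_exts Q le. \<Sum>r\<in>shuffles u v. g r)"
proof -
  define parts where "parts r = (filter (\<lambda>x. x \<in> P) r, filter (\<lambda>x. x \<notin> P) r)" for r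
  have P_eq: "{x\<in>P \<union> Q. x \<in> P} = P" and Q_eq: "{x\<in>P \<union> Q. x \<notin> P} = Q"
    using assms(3) by auto
  have "parts r \<in> rev_lin_exts P le \<times> rev_lin_exts Q le" if "r \<in> rev_lin_exts (P \<union> Q) le" for r
    using filter_rev_lin_exts[OF that, of "\<lambda>x. x \<in> P"] filter_rev_lin_exts[OF that, of "\<lambda>x. x \<notin> P"]
    unfolding P_eq Q_eq parts_def by simp
  then have "parts ` rev_lin_exts (P \<union> Q) le \<subseteq> rev_lin_exts P le \<times> rev_lin_exts Q le"
    by blast
  then have "(\<Sum>r\<in>rev_lin_exts (P \<union> Q) le. g r)
      = (\<Sum>(u, v)\<in>rev_lin_exts P le \<times> rev_lin_exts Q le.
           \<Sum>r\<in>{r\<in>rev_lin_exts (P \<union> Q) le. parts r = (u, v)}. g r)"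
    using assms(1,2) by (simp add: sum.group finite_rev_lin_exts case_prod_unfold)
  also have "\<dots> = (\<Sum>(u, v)\<in>rev_lin_exts P le \<times> rev_lin_exts Q le. \<Sum>r\<in>shuffles u v. g r)"
    by (intro sum.cong refl) (auto simp: parts_def rev_lin_exts_Un_fiber[OF assms(3,4)])
  finally show ?thesis
    by (simp add: sum.cartesian_product)
qed

lemma e_maj_end_disjoint_sum:
  assumes "finite P" "finite Q" "P \<inter> Q = {}" "\<forall>x\<in>P. \<forall>y\<in>Q. \<not> le x y \<and> \<not> le y x"
    and "inj_on \<omega> (P \<union> Q)" "s \<in> P" "\<forall>t\<in>Q. \<omega> t < \<omega> s"
  shows "e_maj_end (P \<union> Q) le \<omega> s =
    gauss_binom (card P + card Q - 1) (card Q) * (e_maj_end P le \<omega> s * e_maj Q le \<omega>)"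
proof -
  let ?G = "gauss_binom (card P + card Q - 1) (card Q)"
  let ?q = "\<lambda>r. monom (1::int) (rmaj \<omega> r)"
  have fiber: "(\<Sum>r\<in>shuffles u v. if hd r = s then ?q r else 0)
      = ?G * ((if hd u = s then ?q u else 0) * ?q v)"
    if "u \<in> rev_lin_exts P le" "v \<in> rev_lin_exts Q le" for u v
  proof -
    have u: "distinct u" "set u = P" and v: "distinct v" "set v = Q"
      using that by (simp_all add: rev_lin_exts_def)
    then have "distinct (u @ v)" "inj_on \<omega> (set (u @ v))" "u \<noteq> []" "\<forall>y\<in>set v. \<omega> y < \<omega> s"
      using assms(3,5-7) by auto
    moreover have "length u = card P" "length v = card Q"
      using distinct_card u v by metis+
    ultimately show ?thesis
      using sum_shuffles_hd_rmaj[of u v \<omega> s] by (simp add: monom_1_add mult_ac)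
  qed
  have "e_maj_end (P \<union> Q) le \<omega> s = (\<Sum>r\<in>rev_lin_exts (P \<union> Q) le. if hd r = s then ?q r else 0)"
    using assms by (simp add: e_maj_end_eq_sum_rev_lin_exts)
  also have "\<dots> = (\<Sum>u\<in>rev_lin_exts P le. \<Sum>v\<in>rev_lin_exts Q le.
                        ?G * ((if hd u = s then ?q u else 0) * ?q v))"
    using assms by (simp add: sum_rev_lin_exts_Un fiber cong: sum.cong)
  also have "\<dots> = ?G * ((\<Sum>u\<in>rev_lin_exts P le. if hd u = s then ?q u else 0)
                      * (\<Sum>v\<in>rev_lin_exts Q le. ?q v))"
    by (subst sum_product) (simp only: sum_distrib_left)
  also have "\<dots> = ?G * (e_maj_end P le \<omega> s * e_maj Q le \<omega>)"
    using assms by (simp add: e_maj_end_eq_sum_rev_lin_exts e_maj_eq_sum_rev_lin_exts inj_on_subset)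
  finally show ?thesis .
qed

theorem corollary3p5:
  fixes P Q :: "'a set" and le :: "'a \<Rightarrow> 'a \<Rightarrow> bool" and \<omega> :: "'a \<Rightarrow> nat"
    and s :: 'a and n p :: nat
  assumes disj: "P \<inter> Q = {}"
    and lp: "is_labeled_poset (P \<union> Q) le \<omega>"
    and sum: "\<forall>x\<in>P. \<forall>y\<in>Q. \<not> le x y \<and> \<not> le y x"
    and sP: "s \<in> P"
    and big: "\<forall>t\<in>Q. \<omega> s > \<omega> t"
    and n: "n = card (P \<union> Q)"
    and p: "p = card P"
  shows "e_maj_end (P \<union> Q) le \<omega> s =
           q_binom (n - 1) (p - 1) * e_maj_end P le (restrict_label \<omega> P) s
             * e_maj Q le (restrict_label \<omega> Q)"
proof -
  have fin: "finite P" "finite Q" and inj: "inj_on \<omega> (P \<union> Q)"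
    using lp by (auto simp: is_labeled_poset_def is_poset_def bij_betw_def)
  have "card P > 0"
    using sP fin by (auto simp: card_gt_0_iff)
  then have "n - 1 = card Q + (p - 1)" "card P + card Q - 1 = card Q + (p - 1)"
    using n p fin disj by (simp_all add: card_Un_disjoint)
  then have "q_binom (n - 1) (p - 1) = gauss_binom (card P + card Q - 1) (card Q)"
    using q_binom_eq_gauss_binom[of "card Q" "p - 1"] gauss_binom_symmetric[of "card Q" "p - 1"]
    by simp
  moreover have "e_maj_end (P \<union> Q) le \<omega> s =
      gauss_binom (card P + card Q - 1) (card Q) * (e_maj_end P le \<omega> s * e_maj Q le \<omega>)"
    using e_maj_end_disjoint_sum[OF fin disj sum inj sP] big by simp
  ultimately show ?thesis
    using fin inj sP
    by (simp add: e_maj_restrict_label e_maj_end_restrict_label inj_on_subset mult.assoc)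
qed

end
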